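(* Let $\mathcal D_n$ be a minimal DFA with state set $Q_n$ and transition semigroup $T_n$. For $t\in T_n$ and $p,q\in Q_n$: $p\prec q$ implies $pt\preceq qt$; and if $p\prec pt$, then $p\prec pt\prec\cdots\prec pt^k=pt^{k+1}$ for some $k\ge1$. Similarly, $p\succ q$ implies $pt\succeq qt$, and $p\succ pt$ implies $p\succ pt\succ\cdots\succ pt^k=pt^{k+1}$ for some $k\ge 1$.
   Context: The transition semigroup is the set of transformations $q\mapsto\delta(q,w)$ of $Q_n$ induced by nonempty words $w$; $qt$ denotes the image of $q$ under $t$, and $t^k$ is the $k$-fold composition. For a state $q$, $K_q$ is the language accepted by the DFA started in $q$. We write $p\prec q$ if $K_p\subsetneq K_q$, and $p\preceq q$ if $K_p\subseteq K_q$ (equivalently $p=q$ or $p\prec q$ in a minimal DFA); $\succ,\succeq$ are the reverse relations. *)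

theory Defs
  imports Main
begin

definition dfa :: "'q set \<Rightarrow> 'a set \<Rightarrow> ('q \<Rightarrow> 'a \<Rightarrow> 'q) \<Rightarrow> 'q \<Rightarrow> 'q set \<Rightarrow> bool" where
  "dfa Q Al delta q0 F \<longleftrightarrow> finite Q \<and> finite Al \<and> q0 \<in> Q \<and> F \<subseteq> Q \<and>
     (\<forall>q\<in>Q. \<forall>a\<in>Al. delta q a \<in> Q)"

definition delta_star :: "('q \<Rightarrow> 'a \<Rightarrow> 'q) \<Rightarrow> 'q \<Rightarrow> 'a list \<Rightarrow> 'q" where
  "delta_star delta q w = foldl delta q w"

definition lang_from :: "'a set \<Rightarrow> ('q \<Rightarrow> 'a \<Rightarrow> 'q) \<Rightarrow> 'q set \<Rightarrow> 'q \<Rightarrow> 'a list set" where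
  "lang_from Al delta F q = {w \<in> lists Al. delta_star delta q w \<in> F}"

definition minimal_dfa :: "'q set \<Rightarrow> 'a set \<Rightarrow> ('q \<Rightarrow> 'a \<Rightarrow> 'q) \<Rightarrow> 'q \<Rightarrow> 'q set \<Rightarrow> bool" where
  "minimal_dfa Q Al delta q0 F \<longleftrightarrow> dfa Q Al delta q0 F \<and>
     (\<forall>q\<in>Q. \<exists>w\<in>lists Al. delta_star delta q0 w = q) \<and>
     (\<forall>p\<in>Q. \<forall>q\<in>Q. lang_from Al delta F p = lang_from Al delta F q \<longrightarrow> p = q)"

definition trans_semigroup :: "'q set \<Rightarrow> 'a set \<Rightarrow> ('q \<Rightarrow> 'a \<Rightarrow> 'q) \<Rightarrow> ('q \<Rightarrow> 'q) set" where
  "trans_semigroup Q Al delta =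
     {t. \<exists>w\<in>lists Al. w \<noteq> [] \<and> (\<forall>q\<in>Q. t q = delta_star delta q w)}"

end

theory Submission
  imports Defs
begin

text \<open>A word w acts on states by q \<mapsto> q w, and K (q w) is the left quotient of K q by w.
  Hence every transformation t of the transition semigroup is monotone with respect to
  language inclusion. If K p \<subset> K (p t), monotonicity makes the languages along the orbit
  p, p t, p t^2, ... an increasing chain; it cannot increase strictly forever since Q is finite,
  and the first repetition K (p t^k) = K (p t^(k+1)) is an equality of states by minimality.
  The decreasing case is the same argument for the complemented languages.\<close>

lemma mono_finite_range_strict_until_constant:
  fixes g :: "nat \<Rightarrow> 'b::order"
  assumes "mono g" and "finite (range g)"
  obtains k where "\<forall>i<k. g i < g (Suc i)" and "g k = g (Suc k)"
proof -
  have "\<exists>k. g k = g (Suc k)"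
  proof (rule ccontr)
    assume "\<nexists>k. g k = g (Suc k)"
    with \<open>mono g\<close> have "strict_mono g"
      by (simp add: strict_mono_Suc_iff mono_iff_le_Suc order_less_le)
    then have "inj g"
      by (rule strict_mono_imp_inj_on)
    with \<open>finite (range g)\<close> show False
      using finite_imageD infinite_UNIV_nat by blast
  qed
  define k where "k = (LEAST k. g k = g (Suc k))"
  have "g k = g (Suc k)"
    unfolding k_def using \<open>\<exists>k. g k = g (Suc k)\<close> by (rule LeastI_ex)
  moreover have "g i < g (Suc i)" if "i < k" for i
    using not_less_Least[OF that[unfolded k_def]] \<open>mono g\<close>
    by (simp add: mono_iff_le_Suc order_less_le)
  ultimately show thesis
    using that by blast
qed

lemma monotone_orbit_strict_chain:
  fixes f :: "'q \<Rightarrow> 'q" and K :: "'q \<Rightarrow> 'b::order"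
  assumes "finite Q" and maps: "\<And>q. q \<in> Q \<Longrightarrow> f q \<in> Q"
    and "inj_on K Q"
    and mono: "\<And>p q. p \<in> Q \<Longrightarrow> q \<in> Q \<Longrightarrow> K p \<le> K q \<Longrightarrow> K (f p) \<le> K (f q)"
    and "p \<in> Q" and "K p < K (f p)"
  shows "\<exists>k\<ge>1. (\<forall>i<k. K ((f ^^ i) p) < K ((f ^^ Suc i) p)) \<and> (f ^^ k) p = (f ^^ Suc k) p"
proof -
  have orbit: "(f ^^ i) p \<in> Q" for i
    by (induction i) (simp_all add: \<open>p \<in> Q\<close> maps)
  define g where "g i = K ((f ^^ i) p)" for i
  have "g i \<le> g (Suc i)" for i
  proof (induction i)
    case 0
    show ?case using \<open>K p < K (f p)\<close> by (simp add: g_def)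
  next
    case (Suc i)
    then show ?case
      using mono[OF orbit[of i] orbit[of "Suc i"]] by (simp add: g_def)
  qed
  then have "mono g"
    by (simp add: mono_iff_le_Suc)
  moreover have "finite (range g)"
  proof -
    have "range g \<subseteq> K ` Q"
      using orbit by (auto simp: g_def)
    then show ?thesis
      using \<open>finite Q\<close> finite_subset by blast
  qed
  ultimately obtain k where strict: "\<forall>i<k. g i < g (Suc i)" and "g k = g (Suc k)"
    by (rule mono_finite_range_strict_until_constant)
  have "k \<ge> 1"
    using \<open>g k = g (Suc k)\<close> \<open>K p < K (f p)\<close> by (cases k) (simp_all add: g_def)
  moreover have "(f ^^ k) p = (f ^^ Suc k) p"
    using \<open>g k = g (Suc k)\<close> unfolding g_def by (rule inj_onD[OF \<open>inj_on K Q\<close> _ orbit orbit])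
  ultimately show ?thesis
    using strict unfolding g_def by blast
qed

lemma delta_star_append: "delta_star delta q (u @ v) = delta_star delta (delta_star delta q u) v"
  by (simp add: delta_star_def)

lemma delta_star_in_states:
  assumes "dfa Q Al delta q0 F" and "q \<in> Q" and "w \<in> lists Al"
  shows "delta_star delta q w \<in> Q"
  using assms(2,3) \<open>dfa Q Al delta q0 F\<close>
  by (induction w arbitrary: q) (auto simp: dfa_def delta_star_def)

lemma lang_from_delta_star:
  assumes "w \<in> lists Al"
  shows "lang_from Al delta F (delta_star delta q w) = {v. w @ v \<in> lang_from Al delta F q}"
  using assms by (auto simp: lang_from_def delta_star_append)

lemma lang_from_delta_star_mono:
  assumes "w \<in> lists Al" and "lang_from Al delta F p \<subseteq> lang_from Al delta F q"
  shows "lang_from Al delta F (delta_star delta p w) \<subseteq> lang_from Al delta F (delta_star delta q w)"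
  using assms by (auto simp: lang_from_delta_star)

lemma trans_semigroup_maps_states:
  assumes "dfa Q Al delta q0 F" and "t \<in> trans_semigroup Q Al delta" and "q \<in> Q"
  shows "t q \<in> Q"
  using assms delta_star_in_states unfolding trans_semigroup_def by fastforce

lemma trans_semigroup_lang_mono:
  assumes "t \<in> trans_semigroup Q Al delta" and "p \<in> Q" and "q \<in> Q"
    and "lang_from Al delta F p \<subseteq> lang_from Al delta F q"
  shows "lang_from Al delta F (t p) \<subseteq> lang_from Al delta F (t q)"
proof -
  obtain w where "w \<in> lists Al" and "\<forall>q\<in>Q. t q = delta_star delta q w"
    using assms(1) unfolding trans_semigroup_def by blast
  then show ?thesis
    using assms(2-4) by (simp add: lang_from_delta_star_mono)
qed

lemma minimal_dfa_inj_lang_from: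
  assumes "minimal_dfa Q Al delta q0 F"
  shows "inj_on (lang_from Al delta F) Q"
  using assms unfolding minimal_dfa_def inj_on_def by blast

theorem proposition3:
  fixes Q :: "'q set" and Al :: "'a set" and delta :: "'q \<Rightarrow> 'a \<Rightarrow> 'q"
    and q0 :: 'q and F :: "'q set"
  defines "K \<equiv> lang_from Al delta F"
  assumes "minimal_dfa Q Al delta q0 F"
    and "t \<in> trans_semigroup Q Al delta"
  shows "(\<forall>p\<in>Q. \<forall>q\<in>Q. K p \<subset> K q \<longrightarrow> K (t p) \<subseteq> K (t q))
       \<and> (\<forall>p\<in>Q. K p \<subset> K (t p) \<longrightarrow>
            (\<exists>k\<ge>1. (\<forall>i<k. K ((t ^^ i) p) \<subset> K ((t ^^ Suc i) p))
                   \<and> (t ^^ k) p = (t ^^ Suc k) p))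
       \<and> (\<forall>p\<in>Q. \<forall>q\<in>Q. K q \<subset> K p \<longrightarrow> K (t q) \<subseteq> K (t p))
       \<and> (\<forall>p\<in>Q. K (t p) \<subset> K p \<longrightarrow>
            (\<exists>k\<ge>1. (\<forall>i<k. K ((t ^^ Suc i) p) \<subset> K ((t ^^ i) p))
                   \<and> (t ^^ k) p = (t ^^ Suc k) p))"
proof -
  have "finite Q" and "dfa Q Al delta q0 F"
    using assms(2) by (simp_all add: minimal_dfa_def dfa_def)
  have maps: "\<And>q. q \<in> Q \<Longrightarrow> t q \<in> Q"
    using \<open>dfa Q Al delta q0 F\<close> assms(3) by (rule trans_semigroup_maps_states)
  have inj: "inj_on K Q"
    unfolding K_def using assms(2) by (rule minimal_dfa_inj_lang_from)
  have mono: "\<And>p q. p \<in> Q \<Longrightarrow> q \<in> Q \<Longrightarrow> K p \<subseteq> K q \<Longrightarrow> K (t p) \<subseteq> K (t q)"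
    unfolding K_def using assms(3) by (rule trans_semigroup_lang_mono)
  have increasing: "\<exists>k\<ge>1. (\<forall>i<k. K ((t ^^ i) p) \<subset> K ((t ^^ Suc i) p)) \<and> (t ^^ k) p = (t ^^ Suc k) p"
    if "p \<in> Q" and "K p \<subset> K (t p)" for p
    using monotone_orbit_strict_chain[of Q t K, OF \<open>finite Q\<close> maps inj mono that] .
  have decreasing: "\<exists>k\<ge>1. (\<forall>i<k. K ((t ^^ Suc i) p) \<subset> K ((t ^^ i) p)) \<and> (t ^^ k) p = (t ^^ Suc k) p"
    if "p \<in> Q" and "K (t p) \<subset> K p" for p
  proof -
    have "inj_on (\<lambda>q. - K q) Q"
      using inj by (simp add: inj_on_def)
    moreover have "- K (t x) \<subseteq> - K (t y)" if "x \<in> Q" "y \<in> Q" "- K x \<subseteq> - K y" for x y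
      using mono that by simp
    moreover have "- K p \<subset> - K (t p)"
      using \<open>K (t p) \<subset> K p\<close> by blast
    ultimately have "\<exists>k\<ge>1. (\<forall>i<k. - K ((t ^^ i) p) \<subset> - K ((t ^^ Suc i) p)) \<and> (t ^^ k) p = (t ^^ Suc k) p"
      using monotone_orbit_strict_chain[of Q t "\<lambda>q. - K q", OF \<open>finite Q\<close> maps] \<open>p \<in> Q\<close> by blast
    then show ?thesis
      by simp
  qed
  have psubset_mono: "K (t p) \<subseteq> K (t q)" if "p \<in> Q" "q \<in> Q" "K p \<subset> K q" for p q
    using mono[OF that(1,2) psubset_imp_subset[OF that(3)]] .
  show ?thesis
    by (intro conjI ballI impI psubset_mono increasing decreasing)
qed

end
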